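(* (i) There exists a non-commutative semiring $S$ (with identity) which is additively cancellative, reduced, centrally essential, and has no non-zero zero-divisors. (ii) Let $S$ be an additively cancellative reduced semiring and let $D(S)$ be its ring of differences. Then $S$ is commutative if and only if $D(S)$ is a centrally essential ring.
   Context: A semiring is a set $S$ with two binary operations $+$ and $\cdot$ such that $(S,+)$ is a commutative monoid with neutral element $0$, $(S,\cdot)$ is a monoid with identity $1$, multiplication distributes over addition on both sides, and $0s=s0=0$ for all $s\in S$ (i.e. an associative ring with $1$ except that additive inverses need not exist). The center of $S$ is $C(S)=\{s\in S: ss'=s's \text{ for all } s'\in S\}$. $S$ is centrally essential if for every non-zero $x\in S$ there exist non-zero $y,z\in C(S)$ with $xy=z$ (for rings this is the same definition). $S$ is reduced if for all $x,y\in S$, $x^2+y^2=xy+yx$ implies $x=y$. $S$ is additively cancellative if $x+z=y+z$ implies $x=y$ for all $x,y,z\in S$. An additively cancellative semiring $S$ embeds as a subsemiring in a ring $D(S)$, its ring of differences, in which every element has the form $x-y$ with $x,y\in S$; $D(S)$ is unique up to isomorphism over $S$. An element $a\in S$ is a left zero-divisor if $ab=0$ for some non-zero $b\in S$ (right zero-divisors analogously); "without zero-divisors" means there are no non-zero zero-divisors. *)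

theory Defs
  imports "HOL-Algebra.Ring"
begin

text \<open>Semirings with identity, represented by HOL-Algebra ring records
  (carrier, add, mult, zero, one). A semiring need not have additive inverses,
  and 0 = 1 is allowed.\<close>

definition semiring :: "('a, 'm) ring_scheme \<Rightarrow> bool" where
  "semiring S \<longleftrightarrow>
     \<zero>\<^bsub>S\<^esub> \<in> carrier S \<and> \<one>\<^bsub>S\<^esub> \<in> carrier S \<and>
     (\<forall>x\<in>carrier S. \<forall>y\<in>carrier S. x \<oplus>\<^bsub>S\<^esub> y \<in> carrier S \<and> x \<otimes>\<^bsub>S\<^esub> y \<in> carrier S) \<and>
     (\<forall>x\<in>carrier S. \<forall>y\<in>carrier S. \<forall>z\<in>carrier S.
        (x \<oplus>\<^bsub>S\<^esub> y) \<oplus>\<^bsub>S\<^esub> z = x \<oplus>\<^bsub>S\<^esub> (y \<oplus>\<^bsub>S\<^esub> z) \<and>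
        (x \<otimes>\<^bsub>S\<^esub> y) \<otimes>\<^bsub>S\<^esub> z = x \<otimes>\<^bsub>S\<^esub> (y \<otimes>\<^bsub>S\<^esub> z) \<and>
        x \<otimes>\<^bsub>S\<^esub> (y \<oplus>\<^bsub>S\<^esub> z) = (x \<otimes>\<^bsub>S\<^esub> y) \<oplus>\<^bsub>S\<^esub> (x \<otimes>\<^bsub>S\<^esub> z) \<and>
        (y \<oplus>\<^bsub>S\<^esub> z) \<otimes>\<^bsub>S\<^esub> x = (y \<otimes>\<^bsub>S\<^esub> x) \<oplus>\<^bsub>S\<^esub> (z \<otimes>\<^bsub>S\<^esub> x)) \<and>
     (\<forall>x\<in>carrier S. \<forall>y\<in>carrier S. x \<oplus>\<^bsub>S\<^esub> y = y \<oplus>\<^bsub>S\<^esub> x) \<and>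
     (\<forall>x\<in>carrier S. x \<oplus>\<^bsub>S\<^esub> \<zero>\<^bsub>S\<^esub> = x \<and>
        \<one>\<^bsub>S\<^esub> \<otimes>\<^bsub>S\<^esub> x = x \<and> x \<otimes>\<^bsub>S\<^esub> \<one>\<^bsub>S\<^esub> = x \<and>
        \<zero>\<^bsub>S\<^esub> \<otimes>\<^bsub>S\<^esub> x = \<zero>\<^bsub>S\<^esub> \<and> x \<otimes>\<^bsub>S\<^esub> \<zero>\<^bsub>S\<^esub> = \<zero>\<^bsub>S\<^esub>)"

definition center :: "('a, 'm) ring_scheme \<Rightarrow> 'a set" where
  "center S = {s \<in> carrier S. \<forall>t\<in>carrier S. s \<otimes>\<^bsub>S\<^esub> t = t \<otimes>\<^bsub>S\<^esub> s}"

definition centrally_essential :: "('a, 'm) ring_scheme \<Rightarrow> bool" where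
  "centrally_essential S \<longleftrightarrow>
     (\<forall>x\<in>carrier S. x \<noteq> \<zero>\<^bsub>S\<^esub> \<longrightarrow>
        (\<exists>y\<in>center S. \<exists>z\<in>center S. y \<noteq> \<zero>\<^bsub>S\<^esub> \<and> z \<noteq> \<zero>\<^bsub>S\<^esub> \<and> x \<otimes>\<^bsub>S\<^esub> y = z))"

definition reduced :: "('a, 'm) ring_scheme \<Rightarrow> bool" where
  "reduced S \<longleftrightarrow>
     (\<forall>x\<in>carrier S. \<forall>y\<in>carrier S.
        (x \<otimes>\<^bsub>S\<^esub> x) \<oplus>\<^bsub>S\<^esub> (y \<otimes>\<^bsub>S\<^esub> y) = (x \<otimes>\<^bsub>S\<^esub> y) \<oplus>\<^bsub>S\<^esub> (y \<otimes>\<^bsub>S\<^esub> x) \<longrightarrow> x = y)"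

definition add_cancellative :: "('a, 'm) ring_scheme \<Rightarrow> bool" where
  "add_cancellative S \<longleftrightarrow>
     (\<forall>x\<in>carrier S. \<forall>y\<in>carrier S. \<forall>z\<in>carrier S.
        x \<oplus>\<^bsub>S\<^esub> z = y \<oplus>\<^bsub>S\<^esub> z \<longrightarrow> x = y)"

definition mult_commutative :: "('a, 'm) ring_scheme \<Rightarrow> bool" where
  "mult_commutative S \<longleftrightarrow>
     (\<forall>x\<in>carrier S. \<forall>y\<in>carrier S. x \<otimes>\<^bsub>S\<^esub> y = y \<otimes>\<^bsub>S\<^esub> x)"

definition no_zero_divisors :: "('a, 'm) ring_scheme \<Rightarrow> bool" where
  "no_zero_divisors S \<longleftrightarrow>
     (\<forall>a\<in>carrier S. \<forall>b\<in>carrier S. a \<otimes>\<^bsub>S\<^esub> b = \<zero>\<^bsub>S\<^esub> \<longrightarrow>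
        a = \<zero>\<^bsub>S\<^esub> \<or> b = \<zero>\<^bsub>S\<^esub>)"

definition ring_of_differences ::
  "('a, 'm) ring_scheme \<Rightarrow> ('b, 'n) ring_scheme \<Rightarrow> ('a \<Rightarrow> 'b) \<Rightarrow> bool" where
  "ring_of_differences S D h \<longleftrightarrow>
     ring D \<and> h \<in> ring_hom S D \<and> inj_on h (carrier S) \<and>
     carrier D = {h x \<ominus>\<^bsub>D\<^esub> h y | x y. x \<in> carrier S \<and> y \<in> carrier S}"

end

(*
  (ii) If S is commutative, so is D(S), and a commutative ring is centrally essential via y = 1.
  Conversely, D(S) inherits reducedness from S because (x - y)^2 = x^2 + y^2 - (xy + yx). In a
  reduced centrally essential ring a central commutator z = [u,b] vanishes: for central w with uw
  central, z w = [uw,b] = 0; taking w = z if uz = 0, and otherwise w = z r for a central r with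
  u z r central and non-zero, gives z^2 = 0 or (z r)^2 = 0, contradicting reducedness. For any a, b
  pick a central s with [a,b] s central and non-zero; then [as,b] = [a,b] s is a non-zero central
  commutator. Hence D(S) is commutative, and so is S.

  (i) Take the subsemiring of N x H (H the integer quaternions) consisting of 0 and the pairs with
  positive first coordinate. H makes it non-commutative and, having no non-zero nilpotents, keeps it
  reduced; the positive N-coordinate excludes zero-divisors, and x (1,0) = (n,0) is central and
  non-zero. The example is moved onto nat along the injection to_nat.
*)
theory Submission
  imports Defs "HOL-Library.Countable" "HOL-Algebra.Multiplicative_Group"
begin

lemma semiring_closed:
  assumes "semiring S"
  shows semiring_zero_closed: "\<zero>\<^bsub>S\<^esub> \<in> carrier S"
    and semiring_one_closed: "\<one>\<^bsub>S\<^esub> \<in> carrier S"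
    and semiring_add_closed: "x \<in> carrier S \<Longrightarrow> y \<in> carrier S \<Longrightarrow> x \<oplus>\<^bsub>S\<^esub> y \<in> carrier S"
    and semiring_mult_closed: "x \<in> carrier S \<Longrightarrow> y \<in> carrier S \<Longrightarrow> x \<otimes>\<^bsub>S\<^esub> y \<in> carrier S"
  using assms by (simp_all add: semiring_def)

lemma centrally_essentialE:
  assumes "centrally_essential S" "x \<in> carrier S" "x \<noteq> \<zero>\<^bsub>S\<^esub>"
  obtains y where "y \<in> center S" "y \<noteq> \<zero>\<^bsub>S\<^esub>" "x \<otimes>\<^bsub>S\<^esub> y \<in> center S" "x \<otimes>\<^bsub>S\<^esub> y \<noteq> \<zero>\<^bsub>S\<^esub>"
  using assms unfolding centrally_essential_def by blast

context ring
begin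

lemma square_minus_eq_zero_iff:
  assumes "a \<in> carrier R" "b \<in> carrier R"
  shows "(a \<ominus> b) \<otimes> (a \<ominus> b) = \<zero> \<longleftrightarrow> a \<otimes> a \<oplus> b \<otimes> b = a \<otimes> b \<oplus> b \<otimes> a"
proof -
  have "(a \<ominus> b) \<otimes> (a \<ominus> b) = (a \<otimes> a \<oplus> b \<otimes> b) \<ominus> (a \<otimes> b \<oplus> b \<otimes> a)"
    using assms by (simp add: minus_eq l_distr r_distr l_minus r_minus minus_add a_ac)
  then show ?thesis
    using assms by simp
qed

lemma reduced_iff_square_zero:
  "reduced R \<longleftrightarrow> (\<forall>x\<in>carrier R. x \<otimes> x = \<zero> \<longrightarrow> x = \<zero>)"
proof
  assume red: "reduced R"
  show "\<forall>x\<in>carrier R. x \<otimes> x = \<zero> \<longrightarrow> x = \<zero>"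
  proof (intro ballI impI)
    fix x assume x: "x \<in> carrier R" "x \<otimes> x = \<zero>"
    then have "x \<otimes> x \<oplus> \<zero> \<otimes> \<zero> = x \<otimes> \<zero> \<oplus> \<zero> \<otimes> x" by simp
    then show "x = \<zero>" using red x unfolding reduced_def by blast
  qed
next
  assume square_zero: "\<forall>x\<in>carrier R. x \<otimes> x = \<zero> \<longrightarrow> x = \<zero>"
  show "reduced R"
    unfolding reduced_def
  proof (intro ballI impI)
    fix x y assume x: "x \<in> carrier R" and y: "y \<in> carrier R"
      and "x \<otimes> x \<oplus> y \<otimes> y = x \<otimes> y \<oplus> y \<otimes> x"
    then have "(x \<ominus> y) \<otimes> (x \<ominus> y) = \<zero>" by (simp add: square_minus_eq_zero_iff)
    then have "x \<ominus> y = \<zero>" using square_zero x y by blast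
    then show "x = y" using x y by simp
  qed
qed

lemma center_closed: "x \<in> center R \<Longrightarrow> x \<in> carrier R"
  by (simp add: center_def)

lemma zero_center: "\<zero> \<in> center R"
  by (simp add: center_def)

lemma center_mult_closed:
  assumes x: "x \<in> center R" and y: "y \<in> center R"
  shows "x \<otimes> y \<in> center R"
proof -
  have xC: "x \<in> carrier R" and xt: "\<And>t. t \<in> carrier R \<Longrightarrow> x \<otimes> t = t \<otimes> x"
    and yC: "y \<in> carrier R" and yt: "\<And>t. t \<in> carrier R \<Longrightarrow> y \<otimes> t = t \<otimes> y"
    using x y by (auto simp: center_def)
  have "(x \<otimes> y) \<otimes> t = t \<otimes> (x \<otimes> y)" if t: "t \<in> carrier R" for t
  proof -
    have "(x \<otimes> y) \<otimes> t = x \<otimes> (t \<otimes> y)"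
      using t xC yC by (simp add: m_assoc yt[OF t])
    also have "\<dots> = t \<otimes> (x \<otimes> y)"
      using t xC yC by (simp add: m_assoc[symmetric] xt[OF t])
    finally show ?thesis .
  qed
  with xC yC show ?thesis by (simp add: center_def)
qed

lemma commutator_mult_center:
  assumes w: "w \<in> center R" and u: "u \<in> carrier R" and b: "b \<in> carrier R"
  shows "(u \<otimes> w) \<otimes> b \<ominus> b \<otimes> (u \<otimes> w) = (u \<otimes> b \<ominus> b \<otimes> u) \<otimes> w"
proof -
  have wC: "w \<in> carrier R" and wb: "w \<otimes> b = b \<otimes> w"
    using w b by (auto simp: center_def)
  have "(u \<otimes> w) \<otimes> b = (u \<otimes> b) \<otimes> w"
    using wC u b by (simp add: m_assoc wb)
  moreover have "b \<otimes> (u \<otimes> w) = (b \<otimes> u) \<otimes> w"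
    using wC u b by (simp add: m_assoc)
  ultimately show ?thesis
    using wC u b by (simp add: minus_eq l_distr l_minus)
qed

lemma centrally_essential_if_mult_commutative:
  assumes "mult_commutative R"
  shows "centrally_essential R"
  unfolding centrally_essential_def
proof (intro ballI impI)
  fix x assume x: "x \<in> carrier R" "x \<noteq> \<zero>"
  have center: "center R = carrier R"
    using assms unfolding center_def mult_commutative_def by blast
  have "\<one> \<noteq> \<zero>"
  proof
    assume "\<one> = \<zero>"
    then have "x = \<zero>" using x by (metis r_one r_null)
    with x show False by simp
  qed
  moreover have "x \<otimes> \<one> = x" using x by simp
  ultimately show "\<exists>y\<in>center R. \<exists>z\<in>center R. y \<noteq> \<zero> \<and> z \<noteq> \<zero> \<and> x \<otimes> y = z"
    using x unfolding center by blast
qed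

lemma commutator_mult_center_eq_zero:
  assumes w: "w \<in> center R" and uw: "u \<otimes> w \<in> center R"
    and u: "u \<in> carrier R" and b: "b \<in> carrier R"
  shows "(u \<otimes> b \<ominus> b \<otimes> u) \<otimes> w = \<zero>"
proof -
  have "(u \<otimes> w) \<otimes> b = b \<otimes> (u \<otimes> w)"
    using uw b by (simp add: center_def)
  then show ?thesis
    using commutator_mult_center[OF w u b] center_closed[OF w] u b by (simp add: minus_eq r_neg)
qed

lemma central_commutator_eq_zero:
  assumes red: "reduced R" and ce: "centrally_essential R"
    and u: "u \<in> carrier R" and b: "b \<in> carrier R" and zC: "u \<otimes> b \<ominus> b \<otimes> u \<in> center R"
  shows "u \<otimes> b \<ominus> b \<otimes> u = \<zero>"
proof (rule ccontr)
  define z where "z = u \<otimes> b \<ominus> b \<otimes> u"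
  assume "z \<noteq> \<zero>"
  have square_zero: "x = \<zero>" if "x \<in> carrier R" "x \<otimes> x = \<zero>" for x
    using red that unfolding reduced_iff_square_zero by blast
  have zC': "z \<in> carrier R" using u b by (simp add: z_def)
  show False
  proof (cases "u \<otimes> z = \<zero>")
    case True
    then have "z \<otimes> z = \<zero>"
      using commutator_mult_center_eq_zero[of z u b] zC zero_center u b by (simp add: z_def)
    then show False
      using square_zero zC' \<open>z \<noteq> \<zero>\<close> by blast
  next
    case False
    obtain r where r: "r \<in> center R"
      and v: "u \<otimes> z \<otimes> r \<in> center R" "u \<otimes> z \<otimes> r \<noteq> \<zero>"
      by (rule centrally_essentialE[OF ce, where x = "u \<otimes> z"]) (use u zC' False in auto)
    have rC: "r \<in> carrier R" and rz: "r \<otimes> z = z \<otimes> r"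
      using r zC' by (auto simp: center_def)
    have "u \<otimes> (z \<otimes> r) = u \<otimes> z \<otimes> r"
      using u zC' rC by (simp add: m_assoc)
    then have zzr: "z \<otimes> (z \<otimes> r) = \<zero>"
      using commutator_mult_center_eq_zero[of "z \<otimes> r" u b] center_mult_closed[OF _ r] zC v(1) u b
      by (simp add: z_def)
    have "(z \<otimes> r) \<otimes> (z \<otimes> r) = z \<otimes> ((r \<otimes> z) \<otimes> r)"
      using zC' rC by (simp add: m_assoc)
    also have "\<dots> = (z \<otimes> (z \<otimes> r)) \<otimes> r"
      using zC' rC by (simp add: rz m_assoc)
    also have "\<dots> = \<zero>"
      using rC by (simp add: zzr)
    finally have "z \<otimes> r = \<zero>"
      using square_zero[of "z \<otimes> r"] zC' rC by simp
    then show False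
      using v u zC' rC by (simp add: m_assoc)
  qed
qed

lemma mult_commutative_if_reduced_centrally_essential:
  assumes red: "reduced R" and ce: "centrally_essential R"
  shows "mult_commutative R"
  unfolding mult_commutative_def
proof (intro ballI)
  fix a b assume a: "a \<in> carrier R" and b: "b \<in> carrier R"
  show "a \<otimes> b = b \<otimes> a"
  proof (rule ccontr)
    assume noncomm: "a \<otimes> b \<noteq> b \<otimes> a"
    obtain s where s: "s \<in> center R"
      and "(a \<otimes> b \<ominus> b \<otimes> a) \<otimes> s \<in> center R" "(a \<otimes> b \<ominus> b \<otimes> a) \<otimes> s \<noteq> \<zero>"
      by (rule centrally_essentialE[OF ce, where x = "a \<otimes> b \<ominus> b \<otimes> a"])
        (use a b noncomm in auto)
    moreover have "(a \<otimes> s) \<otimes> b \<ominus> b \<otimes> (a \<otimes> s) = (a \<otimes> b \<ominus> b \<otimes> a) \<otimes> s"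
      using commutator_mult_center[OF s a b] .
    moreover have "a \<otimes> s \<in> carrier R"
      using a s by (simp add: center_closed)
    ultimately show False
      using central_commutator_eq_zero[OF red ce _ b] by metis
  qed
qed

lemma commute_minus:
  assumes "p \<in> carrier R" "q \<in> carrier R" "q' \<in> carrier R"
    and "p \<otimes> q = q \<otimes> p" "p \<otimes> q' = q' \<otimes> p"
  shows "p \<otimes> (q \<ominus> q') = (q \<ominus> q') \<otimes> p"
  using assms by (simp add: minus_eq l_distr r_distr l_minus r_minus)

end

context
  fixes S :: "('a, 'm) ring_scheme" and D :: "('b, 'n) ring_scheme" and h :: "'a \<Rightarrow> 'b"
  assumes sr: "semiring S" and rod: "ring_of_differences S D h"
begin

lemma ring_differences: "ring D"
  using rod by (simp add: ring_of_differences_def)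

lemma embedding_closed: "x \<in> carrier S \<Longrightarrow> h x \<in> carrier D"
  using rod unfolding ring_of_differences_def by (blast intro: ring_hom_closed)

lemma embedding_mult: "x \<in> carrier S \<Longrightarrow> y \<in> carrier S \<Longrightarrow> h (x \<otimes>\<^bsub>S\<^esub> y) = h x \<otimes>\<^bsub>D\<^esub> h y"
  using rod unfolding ring_of_differences_def by (blast intro: ring_hom_mult)

lemma embedding_add: "x \<in> carrier S \<Longrightarrow> y \<in> carrier S \<Longrightarrow> h (x \<oplus>\<^bsub>S\<^esub> y) = h x \<oplus>\<^bsub>D\<^esub> h y"
  using rod unfolding ring_of_differences_def by (blast intro: ring_hom_add)

lemma embedding_eq_iff: "x \<in> carrier S \<Longrightarrow> y \<in> carrier S \<Longrightarrow> h x = h y \<longleftrightarrow> x = y"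
  using rod unfolding ring_of_differences_def by (blast dest: inj_onD)

lemma differences_cases:
  assumes "d \<in> carrier D"
  obtains x y where "x \<in> carrier S" "y \<in> carrier S" "d = h x \<ominus>\<^bsub>D\<^esub> h y"
  using assms rod unfolding ring_of_differences_def by blast

lemma reduced_differences:
  assumes red: "reduced S"
  shows "reduced D"
proof -
  interpret D: ring D by (rule ring_differences)
  show ?thesis
    unfolding D.reduced_iff_square_zero
  proof (intro ballI impI)
    fix d assume "d \<in> carrier D" and dd: "d \<otimes>\<^bsub>D\<^esub> d = \<zero>\<^bsub>D\<^esub>"
    obtain x y where x: "x \<in> carrier S" and y: "y \<in> carrier S" and d: "d = h x \<ominus>\<^bsub>D\<^esub> h y"
      using \<open>d \<in> carrier D\<close> by (rule differences_cases)
    have "h x \<otimes>\<^bsub>D\<^esub> h x \<oplus>\<^bsub>D\<^esub> h y \<otimes>\<^bsub>D\<^esub> h y = h x \<otimes>\<^bsub>D\<^esub> h y \<oplus>\<^bsub>D\<^esub> h y \<otimes>\<^bsub>D\<^esub> h x"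
      using dd x y by (simp add: d D.square_minus_eq_zero_iff embedding_closed)
    then have "h (x \<otimes>\<^bsub>S\<^esub> x \<oplus>\<^bsub>S\<^esub> y \<otimes>\<^bsub>S\<^esub> y) = h (x \<otimes>\<^bsub>S\<^esub> y \<oplus>\<^bsub>S\<^esub> y \<otimes>\<^bsub>S\<^esub> x)"
      using x y sr by (simp add: embedding_add embedding_mult semiring_mult_closed)
    then have "x \<otimes>\<^bsub>S\<^esub> x \<oplus>\<^bsub>S\<^esub> y \<otimes>\<^bsub>S\<^esub> y = x \<otimes>\<^bsub>S\<^esub> y \<oplus>\<^bsub>S\<^esub> y \<otimes>\<^bsub>S\<^esub> x"
      using x y sr by (simp add: embedding_eq_iff semiring_closed)
    with red x y have "x = y"
      unfolding reduced_def by blast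
    then show "d = \<zero>\<^bsub>D\<^esub>"
      using y by (simp add: d embedding_closed)
  qed
qed

lemma mult_commutative_differences_iff: "mult_commutative D \<longleftrightarrow> mult_commutative S"
proof
  assume comm: "mult_commutative D"
  show "mult_commutative S"
    unfolding mult_commutative_def
  proof (intro ballI)
    fix x y assume "x \<in> carrier S" "y \<in> carrier S"
    with comm have "h (x \<otimes>\<^bsub>S\<^esub> y) = h (y \<otimes>\<^bsub>S\<^esub> x)"
      unfolding mult_commutative_def by (simp add: embedding_mult embedding_closed)
    with \<open>x \<in> carrier S\<close> \<open>y \<in> carrier S\<close> sr show "x \<otimes>\<^bsub>S\<^esub> y = y \<otimes>\<^bsub>S\<^esub> x"
      by (simp add: embedding_eq_iff semiring_mult_closed)
  qed
next
  assume comm: "mult_commutative S"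
  interpret D: ring D by (rule ring_differences)
  have image_comm: "h x \<otimes>\<^bsub>D\<^esub> d = d \<otimes>\<^bsub>D\<^esub> h x" if x: "x \<in> carrier S" and "d \<in> carrier D" for x d
  proof -
    obtain y y' where y: "y \<in> carrier S" "y' \<in> carrier S" and d: "d = h y \<ominus>\<^bsub>D\<^esub> h y'"
      using \<open>d \<in> carrier D\<close> by (rule differences_cases)
    have "h x \<otimes>\<^bsub>D\<^esub> h z = h z \<otimes>\<^bsub>D\<^esub> h x" if "z \<in> carrier S" for z
      using comm x that unfolding mult_commutative_def by (metis embedding_mult)
    with x y show ?thesis
      unfolding d by (intro D.commute_minus) (simp_all add: embedding_closed)
  qed
  show "mult_commutative D"
    unfolding mult_commutative_def
  proof (intro ballI)
    fix d e assume d: "d \<in> carrier D" and e: "e \<in> carrier D"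
    obtain y y' where y: "y \<in> carrier S" "y' \<in> carrier S" and e': "e = h y \<ominus>\<^bsub>D\<^esub> h y'"
      using e by (rule differences_cases)
    show "d \<otimes>\<^bsub>D\<^esub> e = e \<otimes>\<^bsub>D\<^esub> d"
      unfolding e' using d y image_comm
      by (intro D.commute_minus) (simp_all add: embedding_closed)
  qed
qed

end

lemma mult_diff_self_eq_0_iff:
  fixes x y :: "'a :: ring"
  shows "(x - y) * (x - y) = 0 \<longleftrightarrow> x * x + y * y = x * y + y * x"
proof -
  have "(x - y) * (x - y) = (x * x + y * y) - (x * y + y * x)"
    by (simp add: algebra_simps)
  then show ?thesis by simp
qed

lemma nat_square_sum_eq_imp_eq:
  fixes n m :: nat
  assumes "n * n + m * m = n * m + m * n"
  shows "n = m"
proof -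
  have "int n * int n + int m * int m = int n * int m + int m * int n"
    using arg_cong[OF assms, of int] by simp
  then have "(int n - int m) * (int n - int m) = 0"
    by (simp only: mult_diff_self_eq_0_iff)
  then show ?thesis by simp
qed

definition nat_pos_prod :: "(nat \<times> 'r :: ring_1) ring" where
  "nat_pos_prod =
     \<lparr>carrier = {x. 0 < fst x} \<union> {(0, 0)},
      mult = \<lambda>x y. (fst x * fst y, snd x * snd y), one = (1, 1), zero = (0, 0),
      add = \<lambda>x y. (fst x + fst y, snd x + snd y)\<rparr>"

lemma semiring_nat_pos_prod: "semiring (nat_pos_prod :: (nat \<times> 'r :: ring_1) ring)"
  unfolding semiring_def nat_pos_prod_def
  by (auto simp: algebra_simps)

lemma add_cancellative_nat_pos_prod:
  "add_cancellative (nat_pos_prod :: (nat \<times> 'r :: ring_1) ring)"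
  unfolding add_cancellative_def nat_pos_prod_def by (auto simp: prod_eq_iff)

lemma no_zero_divisors_nat_pos_prod:
  "no_zero_divisors (nat_pos_prod :: (nat \<times> 'r :: ring_1) ring)"
  unfolding no_zero_divisors_def nat_pos_prod_def by auto

lemma reduced_nat_pos_prod:
  assumes "\<And>q :: 'r :: ring_1. q * q = 0 \<Longrightarrow> q = 0"
  shows "reduced (nat_pos_prod :: (nat \<times> 'r) ring)"
  unfolding reduced_def
proof (intro ballI impI)
  fix x y :: "nat \<times> 'r"
  assume "x \<otimes>\<^bsub>nat_pos_prod\<^esub> x \<oplus>\<^bsub>nat_pos_prod\<^esub> y \<otimes>\<^bsub>nat_pos_prod\<^esub> y =
    x \<otimes>\<^bsub>nat_pos_prod\<^esub> y \<oplus>\<^bsub>nat_pos_prod\<^esub> y \<otimes>\<^bsub>nat_pos_prod\<^esub> x"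
  then have fst: "fst x * fst x + fst y * fst y = fst x * fst y + fst y * fst x"
    and snd: "snd x * snd x + snd y * snd y = snd x * snd y + snd y * snd x"
    by (simp_all add: nat_pos_prod_def)
  from fst have "fst x = fst y"
    by (rule nat_square_sum_eq_imp_eq)
  moreover from snd have "(snd x - snd y) * (snd x - snd y) = 0"
    by (simp only: mult_diff_self_eq_0_iff)
  ultimately show "x = y"
    using assms[of "snd x - snd y"] by (simp add: prod_eq_iff)
qed

lemma center_nat_pos_prod:
  assumes "0 < n"
  shows "(n, 0) \<in> center (nat_pos_prod :: (nat \<times> 'r :: ring_1) ring)"
  using assms unfolding center_def nat_pos_prod_def by auto

lemma centrally_essential_nat_pos_prod:
  "centrally_essential (nat_pos_prod :: (nat \<times> 'r :: ring_1) ring)"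
  unfolding centrally_essential_def
proof (intro ballI impI)
  fix x :: "nat \<times> 'r"
  assume "x \<in> carrier nat_pos_prod" "x \<noteq> \<zero>\<^bsub>nat_pos_prod\<^esub>"
  then have pos: "0 < fst x" by (auto simp: nat_pos_prod_def)
  show "\<exists>y\<in>center nat_pos_prod. \<exists>z\<in>center nat_pos_prod.
      y \<noteq> \<zero>\<^bsub>nat_pos_prod\<^esub> \<and> z \<noteq> \<zero>\<^bsub>nat_pos_prod\<^esub> \<and> x \<otimes>\<^bsub>nat_pos_prod\<^esub> y = z"
  proof (rule bexI[where x = "(1, 0)"], rule bexI[where x = "(fst x, 0)"])
    show "(1, 0) \<noteq> \<zero>\<^bsub>nat_pos_prod\<^esub> \<and> (fst x, 0) \<noteq> \<zero>\<^bsub>nat_pos_prod\<^esub> \<and>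
        x \<otimes>\<^bsub>nat_pos_prod\<^esub> (1, 0) = (fst x, 0)"
      using pos by (simp add: nat_pos_prod_def)
  qed (use pos in \<open>simp_all add: center_nat_pos_prod\<close>)
qed

lemma mult_commutative_nat_pos_prod_iff:
  "mult_commutative (nat_pos_prod :: (nat \<times> 'r :: ring_1) ring) \<longleftrightarrow> (\<forall>p q :: 'r. p * q = q * p)"
proof
  assume comm: "mult_commutative (nat_pos_prod :: (nat \<times> 'r) ring)"
  show "\<forall>p q :: 'r. p * q = q * p"
  proof (intro allI)
    fix p q :: 'r
    have "(1, p) \<in> carrier nat_pos_prod" "(1, q) \<in> carrier nat_pos_prod"
      by (simp_all add: nat_pos_prod_def)
    with comm have "(1, p) \<otimes>\<^bsub>nat_pos_prod\<^esub> (1, q) = (1, q) \<otimes>\<^bsub>nat_pos_prod\<^esub> (1, p)"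
      unfolding mult_commutative_def by blast
    then show "p * q = q * p" by (simp add: nat_pos_prod_def)
  qed
qed (auto simp: mult_commutative_def nat_pos_prod_def mult.commute)

datatype zquat = ZQuat (re: int) (im_i: int) (im_j: int) (im_k: int)

lemma zquat_eq_iff:
  "p = q \<longleftrightarrow> re p = re q \<and> im_i p = im_i q \<and> im_j p = im_j q \<and> im_k p = im_k q"
  by (cases p, cases q) simp

instance zquat :: countable by countable_datatype

instantiation zquat :: ring_1
begin

definition "0 = ZQuat 0 0 0 0"
definition "1 = ZQuat 1 0 0 0"
definition "p + q = ZQuat (re p + re q) (im_i p + im_i q) (im_j p + im_j q) (im_k p + im_k q)"
definition "- p = ZQuat (- re p) (- im_i p) (- im_j p) (- im_k p)"
definition "p - q = p + - (q :: zquat)"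
definition "p * q = ZQuat
  (re p * re q - im_i p * im_i q - im_j p * im_j q - im_k p * im_k q)
  (re p * im_i q + im_i p * re q + im_j p * im_k q - im_k p * im_j q)
  (re p * im_j q - im_i p * im_k q + im_j p * re q + im_k p * im_i q)
  (re p * im_k q + im_i p * im_j q - im_j p * im_i q + im_k p * re q)"

instance
  by standard (simp_all add: zquat_eq_iff zero_zquat_def one_zquat_def plus_zquat_def
      uminus_zquat_def minus_zquat_def times_zquat_def algebra_simps)

end

lemma zquat_square_eq_zero_iff: "(q :: zquat) * q = 0 \<longleftrightarrow> q = 0"
proof
  assume "q * q = 0"
  then have sq: "re q * re q = im_i q * im_i q + im_j q * im_j q + im_k q * im_k q"
    and "re q * im_i q = 0" "re q * im_j q = 0" "re q * im_k q = 0"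
    by (simp_all add: zquat_eq_iff times_zquat_def zero_zquat_def algebra_simps)
  then have "re q = 0"
    by (cases "re q = 0") (auto simp: zero_less_mult_iff)
  with sq have "im_i q * im_i q + im_j q * im_j q + im_k q * im_k q = 0" by simp
  then show "q = 0"
    using \<open>re q = 0\<close> by (simp add: zquat_eq_iff zero_zquat_def add_nonneg_eq_0_iff)
qed simp

lemma zquat_mult_not_commute: "\<exists>p q :: zquat. p * q \<noteq> q * p"
proof -
  have "ZQuat 0 1 0 0 * ZQuat 0 0 1 0 \<noteq> ZQuat 0 0 1 0 * ZQuat 0 1 0 0"
    by (simp add: times_zquat_def)
  then show ?thesis by blast
qed

definition relabel :: "('a \<Rightarrow> 'b) \<Rightarrow> 'a ring \<Rightarrow> 'b ring" where
  "relabel f R =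
     \<lparr>carrier = f ` carrier R,
      mult = \<lambda>x y. f (inv_into (carrier R) f x \<otimes>\<^bsub>R\<^esub> inv_into (carrier R) f y),
      one = f \<one>\<^bsub>R\<^esub>, zero = f \<zero>\<^bsub>R\<^esub>,
      add = \<lambda>x y. f (inv_into (carrier R) f x \<oplus>\<^bsub>R\<^esub> inv_into (carrier R) f y)\<rparr>"

context
  fixes f :: "'a \<Rightarrow> 'b" and R :: "'a ring"
  assumes inj: "inj_on f (carrier R)"
begin

lemma relabel_simps:
  shows "carrier (relabel f R) = f ` carrier R"
    and "\<one>\<^bsub>relabel f R\<^esub> = f \<one>\<^bsub>R\<^esub>"
    and "\<zero>\<^bsub>relabel f R\<^esub> = f \<zero>\<^bsub>R\<^esub>"
    and "x \<in> carrier R \<Longrightarrow> y \<in> carrier R \<Longrightarrow> f x \<otimes>\<^bsub>relabel f R\<^esub> f y = f (x \<otimes>\<^bsub>R\<^esub> y)"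
    and "x \<in> carrier R \<Longrightarrow> y \<in> carrier R \<Longrightarrow> f x \<oplus>\<^bsub>relabel f R\<^esub> f y = f (x \<oplus>\<^bsub>R\<^esub> y)"
  using inj by (simp_all add: relabel_def)

lemma ball_carrier_relabel:
  "(\<forall>x\<in>carrier (relabel f R). P x) \<longleftrightarrow> (\<forall>x\<in>carrier R. P (f x))"
  by (simp add: relabel_simps)

lemma center_relabel: "semiring R \<Longrightarrow> center (relabel f R) = f ` center R"
  using inj unfolding center_def
  by (auto simp: relabel_simps inj_on_eq_iff semiring_mult_closed)

lemma semiring_relabel: "semiring R \<Longrightarrow> semiring (relabel f R)"
  unfolding semiring_def by (auto simp: relabel_simps)

lemma add_cancellative_relabel_iff:
  "semiring R \<Longrightarrow> add_cancellative (relabel f R) \<longleftrightarrow> add_cancellative R"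
  using inj unfolding add_cancellative_def ball_carrier_relabel
  by (simp add: relabel_simps inj_on_eq_iff semiring_closed)

lemma reduced_relabel_iff:
  "semiring R \<Longrightarrow> reduced (relabel f R) \<longleftrightarrow> reduced R"
  using inj unfolding reduced_def ball_carrier_relabel
  by (simp add: relabel_simps inj_on_eq_iff semiring_closed)

lemma no_zero_divisors_relabel_iff:
  "semiring R \<Longrightarrow> no_zero_divisors (relabel f R) \<longleftrightarrow> no_zero_divisors R"
  using inj unfolding no_zero_divisors_def ball_carrier_relabel
  by (simp add: relabel_simps inj_on_eq_iff semiring_closed)

lemma mult_commutative_relabel_iff:
  "semiring R \<Longrightarrow> mult_commutative (relabel f R) \<longleftrightarrow> mult_commutative R"
  using inj unfolding mult_commutative_def ball_carrier_relabel
  by (simp add: relabel_simps inj_on_eq_iff semiring_closed)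

lemma centrally_essential_relabel:
  assumes sr: "semiring R" and ce: "centrally_essential R"
  shows "centrally_essential (relabel f R)"
  unfolding centrally_essential_def
proof (intro ballI impI)
  have zero: "\<zero>\<^bsub>R\<^esub> \<in> carrier R" and center: "center R \<subseteq> carrier R"
    using sr by (auto simp: semiring_zero_closed center_def)
  fix x' assume "x' \<in> carrier (relabel f R)" "x' \<noteq> \<zero>\<^bsub>relabel f R\<^esub>"
  then obtain x where x: "x \<in> carrier R" "x \<noteq> \<zero>\<^bsub>R\<^esub>" and x': "x' = f x"
    by (auto simp: relabel_simps)
  obtain y where y: "y \<in> center R" "y \<noteq> \<zero>\<^bsub>R\<^esub>"
    and xy: "x \<otimes>\<^bsub>R\<^esub> y \<in> center R" "x \<otimes>\<^bsub>R\<^esub> y \<noteq> \<zero>\<^bsub>R\<^esub>"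
    by (rule centrally_essentialE[OF ce x])
  have "f y \<noteq> f \<zero>\<^bsub>R\<^esub>" "f (x \<otimes>\<^bsub>R\<^esub> y) \<noteq> f \<zero>\<^bsub>R\<^esub>"
    using y xy zero center inj by (auto simp: inj_on_eq_iff)
  moreover have "x' \<otimes>\<^bsub>relabel f R\<^esub> f y = f (x \<otimes>\<^bsub>R\<^esub> y)"
    using x x' y center by (auto simp: relabel_simps)
  ultimately show "\<exists>y'\<in>center (relabel f R). \<exists>z'\<in>center (relabel f R).
      y' \<noteq> \<zero>\<^bsub>relabel f R\<^esub> \<and> z' \<noteq> \<zero>\<^bsub>relabel f R\<^esub> \<and> x' \<otimes>\<^bsub>relabel f R\<^esub> y' = z'"
    using y xy sr by (auto simp: center_relabel relabel_simps)
qed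

end

lemma nat_semiring_noncommutative_centrally_essential:
  "\<exists>S :: nat ring. semiring S \<and> \<not> mult_commutative S \<and> add_cancellative S \<and>
     reduced S \<and> centrally_essential S \<and> no_zero_divisors S"
proof -
  let ?Q = "nat_pos_prod :: (nat \<times> zquat) ring"
  have "reduced ?Q"
    by (rule reduced_nat_pos_prod) (simp add: zquat_square_eq_zero_iff)
  then have Q: "semiring ?Q" "add_cancellative ?Q" "reduced ?Q" "centrally_essential ?Q"
    "no_zero_divisors ?Q" "\<not> mult_commutative ?Q"
    by (simp_all add: semiring_nat_pos_prod add_cancellative_nat_pos_prod
        centrally_essential_nat_pos_prod no_zero_divisors_nat_pos_prod
        mult_commutative_nat_pos_prod_iff zquat_mult_not_commute)
  have inj: "inj_on to_nat (carrier ?Q)"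
    by (rule inj_on_subset[OF inj_to_nat subset_UNIV])
  show ?thesis
    using Q semiring_relabel[OF inj] add_cancellative_relabel_iff[OF inj] reduced_relabel_iff[OF inj]
      centrally_essential_relabel[OF inj] no_zero_divisors_relabel_iff[OF inj]
      mult_commutative_relabel_iff[OF inj]
    by blast
qed

lemma mult_commutative_iff_centrally_essential_differences:
  assumes sr: "semiring S" and red: "reduced S" and rod: "ring_of_differences S D h"
  shows "mult_commutative S \<longleftrightarrow> centrally_essential D"
proof -
  interpret D: ring D by (rule ring_differences[OF sr rod])
  have "reduced D" by (rule reduced_differences[OF sr rod red])
  then show ?thesis
    using D.centrally_essential_if_mult_commutative D.mult_commutative_if_reduced_centrally_essential
      mult_commutative_differences_iff[OF sr rod]
    by blast
qed

theorem theorem1p2: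
  shows "(\<exists>S :: nat ring. semiring S \<and> \<not> mult_commutative S \<and> add_cancellative S \<and>
            reduced S \<and> centrally_essential S \<and> no_zero_divisors S)
       \<and> (\<forall>(S :: ('a, 'm) ring_scheme) (D :: ('b, 'n) ring_scheme) h.
            semiring S \<and> add_cancellative S \<and> reduced S \<and> ring_of_differences S D h \<longrightarrow>
            (mult_commutative S \<longleftrightarrow> centrally_essential D))"
  using nat_semiring_noncommutative_centrally_essential
    mult_commutative_iff_centrally_essential_differences
  by blast

end
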